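(* Let $\gamma$ be a smooth curve in $\mathbb{R}^2\setminus\{0\}$, star-shaped with respect to the origin, with nowhere vanishing centroaffine curvature, and such that at no point of $\gamma$ does its osculating Kepler conic hyper-osculate (i.e. have contact of order at least 3 with $\gamma$). Then the osculating Kepler conics of $\gamma$ at any two distinct points are disjoint (equivalently, nested).
   Context: For $v=(a,b,c)\in\mathbb{R}^3$ with $c>0$, the Kepler conic $K(v)$ is the orthogonal projection to the $(x,y)$-plane of the intersection of the cone $x^2+y^2=z^2$ in $\mathbb{R}^3$ with the plane $ax+by+cz=1$; these are conics with a focus at the origin (ellipses when $-a^2-b^2+c^2>0$, parabolas when $=0$, hyperbolas when $<0$). A curve is star-shaped with respect to the origin if $[\gamma,\gamma']\neq0$, where $[u,v]$ is the $2\times2$ determinant; parametrizing so that $[\gamma,\gamma']=1$, the centroaffine curvature $p$ is defined by $\gamma''=-p\gamma$. The osculating Kepler conic at a point of $\gamma$ is the Kepler conic having contact of order at least 2 with $\gamma$ at that point. *)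

theory Defs
  imports "HOL-Analysis.Analysis"
begin

definition bracket :: "real \<times> real \<Rightarrow> real \<times> real \<Rightarrow> real" where
  "bracket u v = fst u * snd v - snd u * fst v"

fun vder :: "nat \<Rightarrow> (real \<Rightarrow> 'a::real_normed_vector) \<Rightarrow> real \<Rightarrow> 'a" where
  "vder 0 f = f"
| "vder (Suc n) f = (\<lambda>t. vector_derivative (vder n f) (at t))"

definition smooth_curve_on :: "real set \<Rightarrow> (real \<Rightarrow> 'a::real_normed_vector) \<Rightarrow> bool" where
  "smooth_curve_on I f \<longleftrightarrow> (\<forall>n. \<forall>t\<in>I. vder n f differentiable (at t))"

text \<open>Kepler conic K(v), v = (a,b,c) with c > 0: projection to the (x,y)-plane of the
  intersection of the cone x^2+y^2=z^2 with the plane ax+by+cz=1.\<close>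
definition kepler_conic :: "real \<times> real \<times> real \<Rightarrow> (real \<times> real) set" where
  "kepler_conic v = (case v of (a, b, c) \<Rightarrow>
     {(x, y). \<exists>z. x\<^sup>2 + y\<^sup>2 = z\<^sup>2 \<and> a * x + b * y + c * z = 1})"

text \<open>A defining polynomial of K(v) (for c > 0 its zero set is exactly K(v),
  see lemma below; it has nonvanishing gradient along K(v)).\<close>
definition kepler_poly :: "real \<times> real \<times> real \<Rightarrow> real \<times> real \<Rightarrow> real" where
  "kepler_poly v P = (case v of (a, b, c) \<Rightarrow> case P of (x, y) \<Rightarrow>
     (1 - a * x - b * y)\<^sup>2 - c\<^sup>2 * (x\<^sup>2 + y\<^sup>2))"

lemma kepler_poly_zero_iff:
  assumes "c > 0"
  shows "P \<in> kepler_conic (a, b, c) \<longleftrightarrow> kepler_poly (a, b, c) P = 0"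
proof (cases P)
  case (Pair x y)
  have "(\<exists>z. x\<^sup>2 + y\<^sup>2 = z\<^sup>2 \<and> a * x + b * y + c * z = 1)
        \<longleftrightarrow> x\<^sup>2 + y\<^sup>2 = ((1 - a * x - b * y) / c)\<^sup>2"
  proof
    assume "\<exists>z. x\<^sup>2 + y\<^sup>2 = z\<^sup>2 \<and> a * x + b * y + c * z = 1"
    then obtain z where "x\<^sup>2 + y\<^sup>2 = z\<^sup>2" "a * x + b * y + c * z = 1" by blast
    moreover have "z = (1 - a * x - b * y) / c" using calculation(2) assms
      by (simp add: field_simps)
    ultimately show "x\<^sup>2 + y\<^sup>2 = ((1 - a * x - b * y) / c)\<^sup>2" by simp
  next
    assume "x\<^sup>2 + y\<^sup>2 = ((1 - a * x - b * y) / c)\<^sup>2"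
    then show "\<exists>z. x\<^sup>2 + y\<^sup>2 = z\<^sup>2 \<and> a * x + b * y + c * z = 1"
      using assms by (intro exI[of _ "(1 - a * x - b * y) / c"]) (simp add: field_simps)
  qed
  also have "\<dots> \<longleftrightarrow> (1 - a * x - b * y)\<^sup>2 - c\<^sup>2 * (x\<^sup>2 + y\<^sup>2) = 0"
    using assms by (auto simp: field_simps power_divide)
  finally show ?thesis using Pair by (simp add: kepler_conic_def kepler_poly_def)
qed

definition kepler_contact ::
  "real \<times> real \<times> real \<Rightarrow> (real \<Rightarrow> real \<times> real) \<Rightarrow> real \<Rightarrow> nat \<Rightarrow> bool" where
  "kepler_contact v g t k \<longleftrightarrow> (\<forall>j\<le>k. vder j (\<lambda>s. kepler_poly v (g s)) t = 0)"

definition osculating_kepler :: "real \<times> real \<times> real \<Rightarrow> (real \<Rightarrow> real \<times> real) \<Rightarrow> real \<Rightarrow> bool" where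
  "osculating_kepler v g t \<longleftrightarrow> snd (snd v) > 0 \<and> kepler_contact v g t 2"

definition hyperosculating_kepler :: "real \<times> real \<times> real \<Rightarrow> (real \<Rightarrow> real \<times> real) \<Rightarrow> real \<Rightarrow> bool" where
  "hyperosculating_kepler v g t \<longleftrightarrow> snd (snd v) > 0 \<and> kepler_contact v g t 3"

end

theory Submission
  imports Defs
begin

text \<open>
  Lift the curve to the cone, \<open>\<Gamma> = (\<gamma>, |\<gamma>|)\<close>. A point \<open>P \<noteq> 0\<close> lies on \<open>K(a, b, c)\<close>
  iff \<open>(a, b, \<plusminus>c) \<cdot> (P, |P|) = 1\<close>, and the defining polynomial of \<open>K(a, b, c)\<close> along \<open>\<gamma>\<close>
  factors accordingly, so contact of a Kepler conic with \<open>\<gamma>\<close> is contact of one of the planes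
  \<open>(a, b, \<plusminus>c) \<cdot> X = 1\<close> with \<open>\<Gamma>\<close>. Since \<open>det(\<Gamma>, \<Gamma>', \<Gamma>'') = |\<gamma>|\<^sup>-\<^sup>3\<close>, the osculating
  conic at \<open>s\<close> is \<open>K(u(s))\<close> for the unique solution \<open>u(s)\<close> of \<open>u \<cdot> \<Gamma> = 1\<close>,
  \<open>u \<cdot> \<Gamma>' = u \<cdot> \<Gamma>'' = 0\<close>. Differentiating these equations gives \<open>u' \<cdot> \<Gamma> = u' \<cdot> \<Gamma>' = 0\<close>,
  so \<open>u'\<close> is a multiple \<open>\<delta>\<close> of the cone normal \<open>(-\<gamma>/|\<gamma>|, 1)\<close>, and \<open>\<delta> = 0\<close> would make
  \<open>K(u)\<close> hyper-osculate; hence \<open>\<delta>\<close> has constant sign. For a fixed point \<open>P \<noteq> 0\<close>, the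
  functions \<open>s \<mapsto> u(s) \<cdot> (P, \<plusminus>|P|)\<close> have derivative \<open>\<delta> (\<plusminus>|P| - \<gamma>\<cdot>P/|\<gamma>|)\<close>, which by
  Cauchy-Schwarz is \<open>\<ge> 0\<close> (resp. \<open>\<le> 0\<close>) up to the sign of \<open>\<delta>\<close> and vanishes identically on
  no interval, because \<open>\<gamma>\<close> cannot stay on the line through \<open>P\<close>. So the two branches move
  strictly in opposite directions while their order is fixed by the constant sign of
  \<open>u\<^sub>3 = p |\<gamma>|\<^sup>3\<close>, and the value \<open>1\<close> cannot be attained at two different parameters.
\<close>

lemma has_vector_derivative_fst:
  assumes "(f has_vector_derivative f') (at x)"
  shows "((\<lambda>s. fst (f s)) has_real_derivative fst f') (at x)"
  using has_derivative_fst[OF assms[unfolded has_vector_derivative_def]]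
  by (simp add: has_field_derivative_def mult_commute_abs)

lemma has_vector_derivative_snd:
  assumes "(f has_vector_derivative f') (at x)"
  shows "((\<lambda>s. snd (f s)) has_real_derivative snd f') (at x)"
  using has_derivative_snd[OF assms[unfolded has_vector_derivative_def]]
  by (simp add: has_field_derivative_def mult_commute_abs)

lemma vder_eq_derivative_chain:
  fixes f :: "real \<Rightarrow> real" and D :: "nat \<Rightarrow> real \<Rightarrow> real"
  assumes "open I" and "\<And>s. s \<in> I \<Longrightarrow> f s = D 0 s"
    and "\<And>k s. k < n \<Longrightarrow> s \<in> I \<Longrightarrow> (D k has_real_derivative D (Suc k) s) (at s)"
    and "k \<le> n" "s \<in> I"
  shows "vder k f s = D k s"
  using assms(4,5)
proof (induction k arbitrary: s)
  case 0
  then show ?case using assms(2) by simp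
next
  case (Suc k)
  have "(vder k f has_real_derivative D (Suc k) s) (at s)"
    by (rule has_field_derivative_transform_within_open[OF assms(3) \<open>open I\<close> \<open>s \<in> I\<close>])
       (use Suc in auto)
  then show ?case
    by (simp add: vector_derivative_at has_real_derivative_iff_has_vector_derivative)
qed

lemma vder_derivative_chain:
  fixes f :: "real \<Rightarrow> real" and D :: "nat \<Rightarrow> real \<Rightarrow> real"
  assumes "open I" and "\<And>s. s \<in> I \<Longrightarrow> f s = D 0 s"
    and "\<And>k s. k < n \<Longrightarrow> s \<in> I \<Longrightarrow> (D k has_real_derivative D (Suc k) s) (at s)"
    and "k < n" "s \<in> I"
  shows "(vder k f has_real_derivative D (Suc k) s) (at s)"
  by (rule has_field_derivative_transform_within_open[OF assms(3)[OF assms(4,5)] assms(1,5)])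
     (use vder_eq_derivative_chain[OF assms(1,2,3)] assms(4) in auto)

lemma DERIV_locally_const_eq_0:
  assumes "open S" "t \<in> S" "\<And>s. s \<in> S \<Longrightarrow> f s = (k::real)" "(f has_real_derivative D) (at t)"
  shows "D = 0"
proof -
  have "((\<lambda>s. k) has_real_derivative D) (at t)"
    by (rule has_field_derivative_transform_within_open[OF assms(4) assms(1,2)]) (simp add: assms(3))
  then show ?thesis using DERIV_const DERIV_unique by blast
qed

lemma leibniz_sum_Suc:
  fixes f g :: "nat \<Rightarrow> real"
  shows "(\<Sum>i\<le>k. real (k choose i) * (f (Suc i) * g (k - i) + f i * g (Suc (k - i))))
       = (\<Sum>i\<le>Suc k. real (Suc k choose i) * f i * g (Suc k - i))"
proof -
  have "(\<Sum>i\<le>Suc k. real (Suc k choose i) * f i * g (Suc k - i))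
      = f 0 * g (Suc k) + (\<Sum>i\<le>k. real (k choose i) * f (Suc i) * g (k - i))
          + (\<Sum>i\<le>k. real (k choose Suc i) * f (Suc i) * g (k - i))"
    by (subst sum.atMost_Suc_shift) (simp add: sum.distrib algebra_simps)
  also have "(\<Sum>i\<le>k. real (k choose Suc i) * f (Suc i) * g (k - i))
      = (\<Sum>i\<le>k. real (k choose i) * f i * g (Suc (k - i))) - f 0 * g (Suc k)"
  proof -
    have "(\<Sum>i\<le>k. real (k choose i) * f i * g (Suc (k - i)))
        = f 0 * g (Suc k) + (\<Sum>i<k. real (k choose Suc i) * f (Suc i) * g (k - i))"
      by (cases k)
         (simp_all only: sum.atMost_Suc_shift lessThan_Suc_atMost, auto intro!: sum.cong simp: Suc_diff_le)
    moreover have "(\<Sum>i\<le>k. real (k choose Suc i) * f (Suc i) * g (k - i))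
        = (\<Sum>i<k. real (k choose Suc i) * f (Suc i) * g (k - i))"
      by (simp add: lessThan_Suc_atMost[symmetric])
    ultimately show ?thesis by simp
  qed
  finally show ?thesis
    by (simp add: sum.distrib algebra_simps)
qed

lemma has_real_derivative_leibniz_sum:
  fixes f g :: "nat \<Rightarrow> real \<Rightarrow> real"
  assumes "\<And>i. i \<le> k \<Longrightarrow> (f i has_real_derivative f (Suc i) s) (at s)"
    and "\<And>i. i \<le> k \<Longrightarrow> (g i has_real_derivative g (Suc i) s) (at s)"
  shows "((\<lambda>s. \<Sum>i\<le>k. real (k choose i) * f i s * g (k - i) s) has_real_derivative
           (\<Sum>i\<le>Suc k. real (Suc k choose i) * f i s * g (Suc k - i) s)) (at s)"
proof -
  have "((\<lambda>s. \<Sum>i\<le>k. real (k choose i) * f i s * g (k - i) s) has_real_derivative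
          (\<Sum>i\<le>k. real (k choose i) * (f (Suc i) s * g (k - i) s + f i s * g (Suc (k - i)) s))) (at s)"
    by (intro DERIV_sum) (auto intro!: DERIV_cmult DERIV_mult[THEN DERIV_cong] assms simp: mult.assoc)
  then show ?thesis
    using leibniz_sum_Suc[of k "\<lambda>i. f i s" "\<lambda>i. g i s"] by simp
qed

lemma leibniz_sum_eq_0_iff:
  fixes g h :: "nat \<Rightarrow> real"
  assumes "h 0 \<noteq> 0"
  shows "(\<forall>j\<le>n. (\<Sum>i\<le>j. real (j choose i) * g i * h (j - i)) = 0) \<longleftrightarrow> (\<forall>j\<le>n. g j = 0)"
proof (induction n)
  case 0
  then show ?case using assms by simp
next
  case (Suc n)
  have "(\<Sum>i\<le>Suc n. real (Suc n choose i) * g i * h (Suc n - i)) = g (Suc n) * h 0"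
    if "\<forall>j\<le>n. g j = 0" using that by simp
  then show ?case using Suc assms by (auto simp: le_Suc_eq)
qed

lemma connected_nonzero_sign:
  fixes f :: "'a::topological_space \<Rightarrow> real"
  assumes "connected S" "continuous_on S f" "\<forall>x\<in>S. f x \<noteq> 0"
  obtains \<sigma> :: real where "\<sigma> = 1 \<or> \<sigma> = -1" "\<forall>x\<in>S. 0 < \<sigma> * f x"
proof -
  have "(\<forall>x\<in>S. 0 < f x) \<or> (\<forall>x\<in>S. f x < 0)"
  proof (rule ccontr)
    assume "\<not> ?thesis"
    then obtain x y where "x \<in> S" "y \<in> S" "f x \<le> 0" "0 \<le> f y"
      by (auto simp: not_less)
    moreover have "connected (f ` S)" by (rule connected_continuous_image[OF assms(2,1)])
    ultimately have "0 \<in> f ` S"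
      using connectedD_interval[of "f ` S" "f x" "f y" 0] by blast
    then show False using assms(3) by auto
  qed
  then show ?thesis
    using that[of 1] that[of "-1"] by auto
qed

lemma DERIV_nonneg_imp_strict_increasing:
  fixes G D :: "real \<Rightarrow> real"
  assumes "a < b" "\<And>s. s \<in> {a..b} \<Longrightarrow> (G has_real_derivative D s) (at s)"
    and "\<And>s. s \<in> {a..b} \<Longrightarrow> 0 \<le> D s" and "\<exists>s\<in>{a<..<b}. D s \<noteq> 0"
  shows "G a < G b"
proof (rule ccontr)
  assume "\<not> G a < G b"
  have mono: "G u \<le> G v" if "a \<le> u" "u \<le> v" "v \<le> b" for u v
  proof (rule DERIV_nonneg_imp_nondecreasing[OF that(2)])
    fix z assume "u \<le> z" "z \<le> v"
    with that have z: "z \<in> {a..b}" by auto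
    show "\<exists>y. DERIV G z :> y \<and> 0 \<le> y" using assms(2)[OF z] assms(3)[OF z] by blast
  qed
  have const: "G s = G a" if "s \<in> {a<..<b}" for s
  proof -
    have "G a \<le> G s" "G s \<le> G b" using mono[of a s] mono[of s b] that by auto
    then show ?thesis using \<open>\<not> G a < G b\<close> by linarith
  qed
  obtain s where s: "s \<in> {a<..<b}" "D s \<noteq> 0" using assms(4) by blast
  have "D s = 0"
    by (rule DERIV_locally_const_eq_0[OF open_greaterThanLessThan s(1) const assms(2)]) (use s(1) in auto)
  with s show False by simp
qed

lemma kepler_conic_iff:
  "(x, y) \<in> kepler_conic (a, b, c) \<longleftrightarrow>
     a * x + b * y + c * sqrt (x\<^sup>2 + y\<^sup>2) = 1 \<or> a * x + b * y - c * sqrt (x\<^sup>2 + y\<^sup>2) = 1"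
proof -
  define r where "r = sqrt (x\<^sup>2 + y\<^sup>2)"
  have "x\<^sup>2 + y\<^sup>2 = z\<^sup>2 \<longleftrightarrow> z = r \<or> z = - r" for z
  proof -
    have "x\<^sup>2 + y\<^sup>2 = z\<^sup>2 \<longleftrightarrow> \<bar>z\<bar> = r"
      unfolding r_def by (auto simp flip: real_sqrt_abs)
    also have "\<dots> \<longleftrightarrow> z = r \<or> z = - r"
      using real_sqrt_ge_zero[of "x\<^sup>2 + y\<^sup>2"] unfolding r_def[symmetric] by (auto simp: abs_if)
    finally show ?thesis .
  qed
  then show ?thesis
    unfolding kepler_conic_def r_def[symmetric] by (auto simp: algebra_simps)
qed

lemma kepler_conic_uminus: "kepler_conic (a, b, - c) = kepler_conic (a, b, c)"
  by (auto simp: kepler_conic_iff)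

locale centroaffine_curve =
  fixes \<gamma> :: "real \<Rightarrow> real \<times> real" and p :: "real \<Rightarrow> real" and I :: "real set"
  assumes open_I: "open I"
    and smooth: "smooth_curve_on I \<gamma>"
    and nonzero: "\<forall>t\<in>I. \<gamma> t \<noteq> 0"
    and unimodular: "\<forall>t\<in>I. bracket (\<gamma> t) (vder 1 \<gamma> t) = 1"
    and curvature: "\<forall>t\<in>I. vder 2 \<gamma> t = - (p t) *\<^sub>R \<gamma> t"
begin

definition X :: "nat \<Rightarrow> real \<Rightarrow> real" where "X k s = fst (vder k \<gamma> s)"
definition Y :: "nat \<Rightarrow> real \<Rightarrow> real" where "Y k s = snd (vder k \<gamma> s)"

lemma vder_has_vector_derivative:
  "s \<in> I \<Longrightarrow> (vder k \<gamma> has_vector_derivative vder (Suc k) \<gamma> s) (at s)"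
  using smooth unfolding smooth_curve_on_def by (simp add: vector_derivative_works[symmetric])

lemma X_derivative: "s \<in> I \<Longrightarrow> (X k has_real_derivative X (Suc k) s) (at s)"
  unfolding X_def[abs_def] by (rule has_vector_derivative_fst[OF vder_has_vector_derivative])

lemma Y_derivative: "s \<in> I \<Longrightarrow> (Y k has_real_derivative Y (Suc k) s) (at s)"
  unfolding Y_def[abs_def] by (rule has_vector_derivative_snd[OF vder_has_vector_derivative])

lemma X_Y_unimodular: "s \<in> I \<Longrightarrow> X 0 s * Y 1 s - Y 0 s * X 1 s = 1"
  using unimodular unfolding bracket_def X_def Y_def by auto

lemma X_2: "s \<in> I \<Longrightarrow> X 2 s = - p s * X 0 s"
  using curvature unfolding X_def by auto

lemma Y_2: "s \<in> I \<Longrightarrow> Y 2 s = - p s * Y 0 s"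
  using curvature unfolding Y_def by auto

lemma norm_eq_sqrt_X_Y: "norm (\<gamma> s) = sqrt ((X 0 s)\<^sup>2 + (Y 0 s)\<^sup>2)"
  by (cases "\<gamma> s") (simp add: X_def Y_def norm_Pair)

lemma norm_gamma_pos: "s \<in> I \<Longrightarrow> 0 < norm (\<gamma> s)"
  using nonzero by auto

definition rad :: "nat \<Rightarrow> real \<Rightarrow> real" where "rad k = vder k (\<lambda>s. norm (\<gamma> s))"

lemma rad_chain:
  assumes "s \<in> I"
  shows rad_1: "rad 1 s * rad 0 s = X 0 s * X 1 s + Y 0 s * Y 1 s"
    and rad_2: "rad 2 s * rad 0 s = (X 1 s)\<^sup>2 + (Y 1 s)\<^sup>2 + X 0 s * X 2 s + Y 0 s * Y 2 s - (rad 1 s)\<^sup>2"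
    and rad_derivative: "k < 3 \<Longrightarrow> (rad k has_real_derivative rad (Suc k) s) (at s)"
proof -
  define r where "r s = sqrt ((X 0 s)\<^sup>2 + (Y 0 s)\<^sup>2)" for s
  define r1 where "r1 s = (X 0 s * X 1 s + Y 0 s * Y 1 s) / r s" for s
  define r2 where "r2 s = ((X 1 s)\<^sup>2 + (Y 1 s)\<^sup>2 + X 0 s * X 2 s + Y 0 s * Y 2 s - (r1 s)\<^sup>2) / r s" for s
  define D where "D = (!) [r, r1, r2, deriv r2]"
  have r_pos: "0 < r s" if "s \<in> I" for s
    using norm_gamma_pos[OF that] by (simp add: r_def norm_eq_sqrt_X_Y)
  have r: "(r has_real_derivative r1 s) (at s)" if "s \<in> I" for s
  proof -
    have "((\<lambda>s. (X 0 s)\<^sup>2 + (Y 0 s)\<^sup>2) has_real_derivative 2 * (X 0 s * X 1 s + Y 0 s * Y 1 s)) (at s)"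
      using DERIV_add[OF DERIV_power[OF X_derivative[OF that, of 0], of 2]
          DERIV_power[OF Y_derivative[OF that, of 0], of 2]]
      by (simp add: algebra_simps)
    moreover have "sqrt ((X 0 s)\<^sup>2 + (Y 0 s)\<^sup>2) \<noteq> 0"
      using r_pos[OF that] unfolding r_def by linarith
    moreover have "0 < (X 0 s)\<^sup>2 + (Y 0 s)\<^sup>2"
      using r_pos[OF that] unfolding r_def by simp
    ultimately show ?thesis
      unfolding r_def[abs_def] r1_def
      by (intro DERIV_cong[OF DERIV_chain2[OF DERIV_real_sqrt]]) (simp_all add: field_simps)
  qed
  have r1: "(r1 has_real_derivative r2 s) (at s)" if "s \<in> I" for s
  proof -
    have num: "((\<lambda>s. X 0 s * X 1 s + Y 0 s * Y 1 s) has_real_derivative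
        (X 1 s)\<^sup>2 + (Y 1 s)\<^sup>2 + X 0 s * X 2 s + Y 0 s * Y 2 s) (at s)"
      using DERIV_add[OF DERIV_mult[OF X_derivative[OF that, of 0] X_derivative[OF that, of 1]]
          DERIV_mult[OF Y_derivative[OF that, of 0] Y_derivative[OF that, of 1]]]
      by (simp add: power2_eq_square numeral_2_eq_2 algebra_simps)
    have "r s \<noteq> 0" using r_pos[OF that] by simp
    then show ?thesis
      unfolding r1_def[abs_def]
      by (intro DERIV_cong[OF DERIV_divide[OF num r[OF that]]])
         (simp_all add: r1_def r2_def field_simps power2_eq_square)
  qed
  have r2: "r2 differentiable (at s)" if "s \<in> I" for s
  proof -
    have "X k differentiable (at s)" "Y k differentiable (at s)" "r differentiable (at s)"
      "r1 differentiable (at s)" for k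
      using X_derivative[OF that] Y_derivative[OF that] r[OF that] r1[OF that]
      unfolding real_differentiable_def by blast+
    then show ?thesis
      using r_pos[OF that] unfolding r2_def[abs_def] by (intro derivative_intros) auto
  qed
  have chain: "(D k has_real_derivative D (Suc k) s) (at s)" if "k < 3" "s \<in> I" for k s
  proof -
    have "k = 0 \<or> k = 1 \<or> k = 2" using that(1) by auto
    then show ?thesis
      using r[OF that(2)] r1[OF that(2)] r2[OF that(2)]
      by (auto simp: D_def numeral_2_eq_2 DERIV_deriv_iff_real_differentiable)
  qed
  have start: "norm (\<gamma> s) = D 0 s" for s
    by (simp add: D_def r_def norm_eq_sqrt_X_Y)
  have rad_eq: "rad k s = D k s" if "k \<le> 3" for k
    unfolding rad_def by (rule vder_eq_derivative_chain[OF open_I start chain that assms])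
  show "rad 1 s * rad 0 s = X 0 s * X 1 s + Y 0 s * Y 1 s"
    using rad_eq[of 0] rad_eq[of 1] r_pos[OF assms] by (simp add: D_def r1_def)
  show "rad 2 s * rad 0 s = (X 1 s)\<^sup>2 + (Y 1 s)\<^sup>2 + X 0 s * X 2 s + Y 0 s * Y 2 s - (rad 1 s)\<^sup>2"
    using rad_eq[of 0] rad_eq[of 1] rad_eq[of 2] r_pos[OF assms] by (simp add: D_def r2_def)
  show "(rad k has_real_derivative rad (Suc k) s) (at s)" if "k < 3"
    using vder_derivative_chain[OF open_I start chain that assms] rad_eq[of "Suc k"] that
    unfolding rad_def by simp
qed

lemma rad_0_sq: "(rad 0 s)\<^sup>2 = (X 0 s)\<^sup>2 + (Y 0 s)\<^sup>2"
  by (simp add: rad_def norm_eq_sqrt_X_Y)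

lemma rad_0_pos: "s \<in> I \<Longrightarrow> 0 < rad 0 s"
  using norm_gamma_pos by (simp add: rad_def)

text \<open>\<open>rad 2 s + p s * rad 0 s\<close> is \<open>det(\<Gamma>, \<Gamma>', \<Gamma>'')\<close>,
  since \<open>\<Gamma>'' = -p \<Gamma> + (rad 2 + p rad 0) e\<^sub>3\<close>.\<close>

lemma rad_2_curvature:
  assumes "s \<in> I"
  shows "(rad 2 s + p s * rad 0 s) * (rad 0 s)^3 = 1"
proof -
  define A B where "A = (X 0 s)\<^sup>2 + (Y 0 s)\<^sup>2" and "B = (X 1 s)\<^sup>2 + (Y 1 s)\<^sup>2"
  have rad_2': "rad 2 s * rad 0 s = B - p s * A - (rad 1 s)\<^sup>2"
    unfolding rad_2[OF assms] X_2[OF assms] Y_2[OF assms] A_def B_def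
    by (simp add: power2_eq_square algebra_simps)
  have "rad 2 s * (rad 0 s)^3 = (rad 0 s)\<^sup>2 * (rad 2 s * rad 0 s)"
    by (simp add: power2_eq_square power3_eq_cube)
  also have "\<dots> = (rad 0 s)\<^sup>2 * (B - p s * A) - (rad 1 s * rad 0 s)\<^sup>2"
    unfolding rad_2' by (simp add: power2_eq_square algebra_simps)
  also have "\<dots> = A * B - (X 0 s * X 1 s + Y 0 s * Y 1 s)\<^sup>2 - p s * A\<^sup>2"
    unfolding rad_1[OF assms] rad_0_sq A_def by (simp add: power2_eq_square algebra_simps)
  also have "\<dots> = (X 0 s * Y 1 s - Y 0 s * X 1 s)\<^sup>2 - p s * A\<^sup>2"
    unfolding A_def B_def by (simp add: power2_eq_square algebra_simps)
  also have "\<dots> = 1 - p s * rad 0 s * (rad 0 s)^3"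
    unfolding X_Y_unimodular[OF assms] A_def rad_0_sq[symmetric] by (simp add: power2_eq_square power3_eq_cube)
  finally show ?thesis by (simp add: algebra_simps)
qed

text \<open>\<open>lift_form a b c k s\<close> is \<open>(a, b, c) \<cdot> \<Gamma>\<^sup>(\<^sup>k\<^sup>)(s)\<close>; \<open>lift_contact a b c n s\<close> says that the
  plane \<open>(a, b, c) \<cdot> X = 1\<close> has contact of order \<open>n\<close> with \<open>\<Gamma>\<close> at \<open>s\<close>.\<close>

definition lift_form :: "real \<Rightarrow> real \<Rightarrow> real \<Rightarrow> nat \<Rightarrow> real \<Rightarrow> real" where
  "lift_form a b c k s = a * X k s + b * Y k s + c * rad k s"

definition lift_contact :: "real \<Rightarrow> real \<Rightarrow> real \<Rightarrow> nat \<Rightarrow> real \<Rightarrow> bool" where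
  "lift_contact a b c n s \<longleftrightarrow> (\<forall>k\<le>n. lift_form a b c k s = of_bool (k = 0))"

lemma lift_form_diff:
  "lift_form (a - a') (b - b') (c - c') k s = lift_form a b c k s - lift_form a' b' c' k s"
  by (simp add: lift_form_def algebra_simps)

lemma lift_form_2:
  "s \<in> I \<Longrightarrow> lift_form a b c 2 s = - p s * lift_form a b c 0 s + c * (rad 2 s + p s * rad 0 s)"
  by (simp add: lift_form_def X_2 Y_2 algebra_simps)

lemma lift_form_derivative:
  assumes "s \<in> I" "k < 3"
    and "(a has_real_derivative a') (at s)" "(b has_real_derivative b') (at s)"
    "(c has_real_derivative c') (at s)"
  shows "((\<lambda>s. lift_form (a s) (b s) (c s) k s) has_real_derivative
           lift_form a' b' c' k s + lift_form (a s) (b s) (c s) (Suc k) s) (at s)"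
  unfolding lift_form_def
  by (rule DERIV_cong[OF DERIV_add[OF DERIV_add[OF DERIV_mult[OF assms(3) X_derivative[OF assms(1)]]
        DERIV_mult[OF assms(4) Y_derivative[OF assms(1)]]]
        DERIV_mult[OF assms(5) rad_derivative[OF assms(1,2)]]]])
     (simp add: algebra_simps)

lemma lift_form_kernel:
  assumes "s \<in> I" "lift_form a b c 0 s = 0" "lift_form a b c 1 s = 0"
  shows "a * rad 0 s = - c * X 0 s" "b * rad 0 s = - c * Y 0 s"
proof -
  note unimod = X_Y_unimodular[OF assms(1)]
  have eq0: "a * X 0 s + b * Y 0 s = - c * rad 0 s" and eq1: "a * X 1 s + b * Y 1 s = - c * rad 1 s"
    using assms(2,3) unfolding lift_form_def by simp_all
  have "(a * X 0 s + b * Y 0 s) * Y 1 s - (a * X 1 s + b * Y 1 s) * Y 0 s = a * (X 0 s * Y 1 s - Y 0 s * X 1 s)"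
    "(a * X 1 s + b * Y 1 s) * X 0 s - (a * X 0 s + b * Y 0 s) * X 1 s = b * (X 0 s * Y 1 s - Y 0 s * X 1 s)"
    by (simp_all add: algebra_simps)
  then have a: "a = c * (rad 1 s * Y 0 s - rad 0 s * Y 1 s)"
    and b: "b = c * (rad 0 s * X 1 s - rad 1 s * X 0 s)"
    unfolding eq0 eq1 unimod by (simp_all add: algebra_simps)
  have "a * rad 0 s = c * ((rad 1 s * rad 0 s) * Y 0 s - (rad 0 s)\<^sup>2 * Y 1 s)"
    unfolding a by (simp add: power2_eq_square algebra_simps)
  moreover have "b * rad 0 s = c * ((rad 0 s)\<^sup>2 * X 1 s - (rad 1 s * rad 0 s) * X 0 s)"
    unfolding b by (simp add: power2_eq_square algebra_simps)
  moreover have "(X 0 s * X 1 s + Y 0 s * Y 1 s) * Y 0 s - ((X 0 s)\<^sup>2 + (Y 0 s)\<^sup>2) * Y 1 s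
      = - X 0 s * (X 0 s * Y 1 s - Y 0 s * X 1 s)"
    "((X 0 s)\<^sup>2 + (Y 0 s)\<^sup>2) * X 1 s - (X 0 s * X 1 s + Y 0 s * Y 1 s) * X 0 s
      = - Y 0 s * (X 0 s * Y 1 s - Y 0 s * X 1 s)"
    by (simp_all add: power2_eq_square algebra_simps)
  ultimately show "a * rad 0 s = - c * X 0 s" "b * rad 0 s = - c * Y 0 s"
    unfolding rad_1[OF assms(1)] rad_0_sq unimod by simp_all
qed

lemma kepler_poly_factor:
  "kepler_poly (a, b, c) (\<gamma> s) = (1 - lift_form a b c 0 s) * (1 - lift_form a b (- c) 0 s)"
proof -
  have "\<gamma> s = (X 0 s, Y 0 s)" by (simp add: X_def Y_def)
  then show ?thesis
    using rad_0_sq[of s] by (simp add: kepler_poly_def lift_form_def power2_eq_square algebra_simps)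
qed

lemma kepler_contact_iff_lift_contact_if:
  assumes "s \<in> I" "n \<le> 3" "lift_form a b (- c) 0 s \<noteq> 1"
  shows "kepler_contact (a, b, c) \<gamma> s n \<longleftrightarrow> lift_contact a b c n s"
proof -
  define F where "F c' k s = of_bool (k = 0) - lift_form a b c' k s" for c' k s
  have F: "(F c' k has_real_derivative F c' (Suc k) s) (at s)" if "k < 3" "s \<in> I" for c' k s
    using DERIV_diff[OF DERIV_const lift_form_derivative[OF that(2,1) DERIV_const DERIV_const DERIV_const]]
    by (simp add: F_def[abs_def] lift_form_def)
  define P where "P k s = (\<Sum>i\<le>k. real (k choose i) * F c i s * F (- c) (k - i) s)" for k s
  have P: "(P k has_real_derivative P (Suc k) s) (at s)" if "k < 3" "s \<in> I" for k s
    unfolding P_def[abs_def] by (rule has_real_derivative_leibniz_sum) (use F that in auto)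
  have "vder k (\<lambda>s. kepler_poly (a, b, c) (\<gamma> s)) s = P k s" if "k \<le> 3" for k
    using open_I P that assms(1)
    by (intro vder_eq_derivative_chain[where D = P and n = 3])
       (auto simp: P_def F_def kepler_poly_factor)
  then have "kepler_contact (a, b, c) \<gamma> s n \<longleftrightarrow> (\<forall>j\<le>n. P j s = 0)"
    using assms(2) unfolding kepler_contact_def by auto
  also have "\<dots> \<longleftrightarrow> (\<forall>j\<le>n. F c j s = 0)"
    unfolding P_def by (rule leibniz_sum_eq_0_iff) (use assms(3) in \<open>simp add: F_def\<close>)
  also have "\<dots> \<longleftrightarrow> lift_contact a b c n s"
    unfolding lift_contact_def F_def by auto
  finally show ?thesis .
qed

lemma kepler_contact_iff_lift_contact:
  assumes "s \<in> I" "n \<le> 3" "c \<noteq> 0"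
  shows "kepler_contact (a, b, c) \<gamma> s n \<longleftrightarrow> lift_contact a b c n s \<or> lift_contact a b (- c) n s"
proof -
  have not_one: "\<not> lift_contact a b c' n s" if "lift_form a b c' 0 s \<noteq> 1" for c'
    using that by (auto simp: lift_contact_def)
  have "lift_form a b c 0 s \<noteq> lift_form a b (- c) 0 s"
    using assms(3) rad_0_pos[OF assms(1)] by (simp add: lift_form_def)
  then consider "lift_form a b (- c) 0 s \<noteq> 1" | "lift_form a b (- (- c)) 0 s \<noteq> 1"
    by force
  then show ?thesis
  proof cases
    case 1
    then show ?thesis
      using kepler_contact_iff_lift_contact_if[OF assms(1,2) 1] not_one by blast
  next
    case 2
    have "kepler_contact (a, b, c) \<gamma> s n = kepler_contact (a, b, - c) \<gamma> s n"
      by (simp add: kepler_contact_def kepler_poly_def)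
    then show ?thesis
      using kepler_contact_iff_lift_contact_if[OF assms(1,2) 2] not_one 2 by auto
  qed
qed

lemma lift_frame_independent:
  assumes "s \<in> I" "lift_form a b c 0 s = 0" "lift_form a b c 1 s = 0" "lift_form a b c 2 s = 0"
  shows "a = 0 \<and> b = 0 \<and> c = 0"
proof -
  have "c * (rad 2 s + p s * rad 0 s) = 0"
    using assms(2,4) lift_form_2[OF assms(1)] by simp
  then have "c = 0"
    using rad_2_curvature[OF assms(1)] by auto
  then show ?thesis
    using lift_form_kernel[OF assms(1-3)] rad_0_pos[OF assms(1)] by simp
qed

text \<open>On \<open>I\<close> this is \<open>p s * |\<gamma> s|\<^sup>3\<close> (\<open>osc_c_eq\<close>); it is written without \<open>p\<close>, which is not
  assumed differentiable.\<close>

definition osc_c :: "real \<Rightarrow> real" where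
  "osc_c s = - (X 2 s * X 0 s + Y 2 s * Y 0 s) * rad 0 s"

text \<open>Cramer's rule for the first two contact equations, using \<open>[\<gamma>, \<gamma>'] = 1\<close>.\<close>

definition osc_a :: "real \<Rightarrow> real" where
  "osc_a s = (1 - osc_c s * rad 0 s) * Y 1 s + osc_c s * rad 1 s * Y 0 s"

definition osc_b :: "real \<Rightarrow> real" where
  "osc_b s = - (1 - osc_c s * rad 0 s) * X 1 s - osc_c s * rad 1 s * X 0 s"

lemma osc_c_eq: "s \<in> I \<Longrightarrow> osc_c s = p s * (rad 0 s)^3"
  unfolding osc_c_def X_2 Y_2 using rad_0_sq[of s]
  by (simp add: power2_eq_square power3_eq_cube algebra_simps)

lemma lift_contact_osc: "s \<in> I \<Longrightarrow> lift_contact (osc_a s) (osc_b s) (osc_c s) 2 s"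
proof -
  assume s: "s \<in> I"
  note unimod = X_Y_unimodular[OF s]
  have 0: "lift_form (osc_a s) (osc_b s) (osc_c s) 0 s = 1"
  proof -
    have "lift_form (osc_a s) (osc_b s) (osc_c s) 0 s
        = (1 - osc_c s * rad 0 s) * (X 0 s * Y 1 s - Y 0 s * X 1 s) + osc_c s * rad 0 s"
      by (simp add: lift_form_def osc_a_def osc_b_def algebra_simps)
    then show ?thesis unfolding unimod by simp
  qed
  have 1: "lift_form (osc_a s) (osc_b s) (osc_c s) 1 s = 0"
  proof -
    have "lift_form (osc_a s) (osc_b s) (osc_c s) 1 s
        = osc_c s * rad 1 s * (1 - (X 0 s * Y 1 s - Y 0 s * X 1 s))"
      by (simp add: lift_form_def osc_a_def osc_b_def algebra_simps)
    then show ?thesis unfolding unimod by simp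
  qed
  have 2: "lift_form (osc_a s) (osc_b s) (osc_c s) 2 s = 0"
  proof -
    have "lift_form (osc_a s) (osc_b s) (osc_c s) 2 s
        = - p s + p s * ((rad 2 s + p s * rad 0 s) * (rad 0 s)^3)"
      unfolding lift_form_2[OF s] 0 by (simp add: osc_c_eq[OF s] algebra_simps)
    then show ?thesis unfolding rad_2_curvature[OF s] by simp
  qed
  show ?thesis
    using 0 1 2 by (auto simp: lift_contact_def le_Suc_eq numeral_2_eq_2)
qed

lemma lift_contact_2_iff:
  assumes "s \<in> I"
  shows "lift_contact a b c 2 s \<longleftrightarrow> a = osc_a s \<and> b = osc_b s \<and> c = osc_c s"
proof
  assume "lift_contact a b c 2 s"
  then have "lift_form (a - osc_a s) (b - osc_b s) (c - osc_c s) k s = 0" if "k \<le> 2" for k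
    using lift_contact_osc[OF assms] that unfolding lift_form_diff lift_contact_def by simp
  then show "a = osc_a s \<and> b = osc_b s \<and> c = osc_c s"
    using lift_frame_independent[OF assms, of "a - osc_a s" "b - osc_b s" "c - osc_c s"] by simp
qed (use lift_contact_osc[OF assms] in simp)

definition osc_c' :: "real \<Rightarrow> real" where
  "osc_c' s = - (X 3 s * X 0 s + X 2 s * X 1 s + Y 3 s * Y 0 s + Y 2 s * Y 1 s) * rad 0 s
              - (X 2 s * X 0 s + Y 2 s * Y 0 s) * rad 1 s"

lemma osc_c_derivative:
  assumes "s \<in> I"
  shows "(osc_c has_real_derivative osc_c' s) (at s)"
proof -
  have "((\<lambda>s. X 2 s * X 0 s + Y 2 s * Y 0 s) has_real_derivative
      X 3 s * X 0 s + X 2 s * X 1 s + Y 3 s * Y 0 s + Y 2 s * Y 1 s) (at s)"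
    using DERIV_add[OF DERIV_mult[OF X_derivative[OF assms, of 2] X_derivative[OF assms, of 0]]
        DERIV_mult[OF Y_derivative[OF assms, of 2] Y_derivative[OF assms, of 0]]]
    by (simp add: numeral_3_eq_3 numeral_2_eq_2 algebra_simps)
  from DERIV_mult[OF DERIV_minus[OF this] rad_derivative[OF assms, of 0]] show ?thesis
    unfolding osc_c_def[abs_def] osc_c'_def by (simp add: algebra_simps)
qed

lemma osc_c'_continuous: "s \<in> I \<Longrightarrow> isCont osc_c' s"
  unfolding osc_c'_def[abs_def]
  by (intro continuous_intros DERIV_isCont[OF X_derivative] DERIV_isCont[OF Y_derivative]
      DERIV_isCont[OF rad_derivative]) auto

lemma osc_derivative:
  assumes "s \<in> I"
  shows osc_a_derivative: "(osc_a has_real_derivative - osc_c' s * X 0 s / rad 0 s) (at s)"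
    and osc_b_derivative: "(osc_b has_real_derivative - osc_c' s * Y 0 s / rad 0 s) (at s)"
    and lift_contact_3_osc: "osc_c' s = 0 \<Longrightarrow> lift_contact (osc_a s) (osc_b s) (osc_c s) 3 s"
proof -
  have "X k differentiable (at s)" "Y k differentiable (at s)" "rad 0 differentiable (at s)"
    "rad 1 differentiable (at s)" "osc_c differentiable (at s)" for k
    using X_derivative[OF assms] Y_derivative[OF assms] rad_derivative[OF assms, of 0]
      rad_derivative[OF assms, of 1] osc_c_derivative[OF assms]
    unfolding real_differentiable_def by auto
  then have "osc_a differentiable (at s)" "osc_b differentiable (at s)"
    unfolding osc_a_def[abs_def] osc_b_def[abs_def] by (auto intro!: derivative_intros)
  then obtain a' b' where a': "(osc_a has_real_derivative a') (at s)"
    and b': "(osc_b has_real_derivative b') (at s)"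
    unfolding real_differentiable_def by blast
  note osc = lift_contact_osc[unfolded lift_contact_def]
  have D: "lift_form a' b' (osc_c' s) k s + lift_form (osc_a s) (osc_b s) (osc_c s) (Suc k) s = 0"
    if "k < 3" for k
    by (rule DERIV_locally_const_eq_0[OF open_I assms _
          lift_form_derivative[OF assms that a' b' osc_c_derivative[OF assms]]])
       (use osc that in auto)
  have "lift_form a' b' (osc_c' s) 0 s = 0" "lift_form a' b' (osc_c' s) 1 s = 0"
    using D[of 0] D[of 1] osc[OF assms] by (simp_all add: numeral_2_eq_2)
  from lift_form_kernel[OF assms this] rad_0_pos[OF assms]
  have a'_eq: "a' = - osc_c' s * X 0 s / rad 0 s" and b'_eq: "b' = - osc_c' s * Y 0 s / rad 0 s"
    by (simp_all add: field_simps)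
  show "(osc_a has_real_derivative - osc_c' s * X 0 s / rad 0 s) (at s)"
    using a' unfolding a'_eq .
  show "(osc_b has_real_derivative - osc_c' s * Y 0 s / rad 0 s) (at s)"
    using b' unfolding b'_eq .
  assume "osc_c' s = 0"
  then have "lift_form (osc_a s) (osc_b s) (osc_c s) 3 s = 0"
    using D[of 2] a'_eq b'_eq by (simp add: lift_form_def numeral_3_eq_3)
  then show "lift_contact (osc_a s) (osc_b s) (osc_c s) 3 s"
    using osc[OF assms] by (auto simp: lift_contact_def le_Suc_eq numeral_3_eq_3)
qed

lemma osc_c'_nonzero:
  assumes "s \<in> I" "p s \<noteq> 0" "\<forall>v. \<not> hyperosculating_kepler v \<gamma> s"
  shows "osc_c' s \<noteq> 0"
proof
  assume "osc_c' s = 0"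
  then have contact: "lift_contact (osc_a s) (osc_b s) (osc_c s) 3 s"
    by (rule lift_contact_3_osc[OF assms(1)])
  have "osc_c s \<noteq> 0"
    using osc_c_eq[OF assms(1)] rad_0_pos[OF assms(1)] assms(2) by simp
  then have "kepler_contact (osc_a s, osc_b s, \<bar>osc_c s\<bar>) \<gamma> s 3"
    using kepler_contact_iff_lift_contact[OF assms(1), of 3 "\<bar>osc_c s\<bar>"] contact by (auto simp: abs_if)
  then have "hyperosculating_kepler (osc_a s, osc_b s, \<bar>osc_c s\<bar>) \<gamma> s"
    using \<open>osc_c s \<noteq> 0\<close> by (simp add: hyperosculating_kepler_def)
  with assms(3) show False by blast
qed

lemma osculating_kepler_conic:
  assumes "s \<in> I" "osculating_kepler v \<gamma> s"
  shows "kepler_conic v = kepler_conic (osc_a s, osc_b s, osc_c s)"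
proof -
  obtain a b c where v: "v = (a, b, c)" by (cases v) auto
  have "0 < c" "kepler_contact (a, b, c) \<gamma> s 2"
    using assms(2) unfolding v osculating_kepler_def by auto
  then have "lift_contact a b c 2 s \<or> lift_contact a b (- c) 2 s"
    using kepler_contact_iff_lift_contact[OF assms(1)] by simp
  then have "a = osc_a s" "b = osc_b s" "c = osc_c s \<or> - c = osc_c s"
    unfolding lift_contact_2_iff[OF assms(1)] by auto
  then show ?thesis
    unfolding v using kepler_conic_uminus by metis
qed

definition osc_value :: "real \<Rightarrow> real \<Rightarrow> real \<Rightarrow> real \<Rightarrow> real" where
  "osc_value \<tau> x y s = osc_a s * x + osc_b s * y + \<tau> * osc_c s * sqrt (x\<^sup>2 + y\<^sup>2)"

lemma osc_value_derivative:
  assumes "s \<in> I"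
  shows "(osc_value \<tau> x y has_real_derivative
           osc_c' s * (\<tau> * sqrt (x\<^sup>2 + y\<^sup>2) - (X 0 s * x + Y 0 s * y) / rad 0 s)) (at s)"
  unfolding osc_value_def[abs_def]
  by (rule DERIV_cong[OF DERIV_add[OF DERIV_add[OF DERIV_cmult_right[OF osc_a_derivative[OF assms]]
        DERIV_cmult_right[OF osc_b_derivative[OF assms]]]
        DERIV_cmult_right[OF DERIV_cmult[OF osc_c_derivative[OF assms]]]]])
     (simp add: algebra_simps add_divide_distrib)

lemma lagrange_identity_rad:
  "(X 0 s * x + Y 0 s * y)\<^sup>2 + (X 0 s * y - Y 0 s * x)\<^sup>2 = (rad 0 s)\<^sup>2 * (x\<^sup>2 + y\<^sup>2)"
  unfolding rad_0_sq by (simp add: power2_eq_square algebra_simps)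

lemma radial_eq_zero_on_interval:
  assumes "a < b" "{a<..<b} \<subseteq> I" "\<forall>s\<in>{a<..<b}. X 0 s * y - Y 0 s * x = 0"
  shows "x = 0 \<and> y = 0"
proof -
  define s where "s = (a + b) / 2"
  have s: "s \<in> {a<..<b}" "s \<in> I" using assms(1,2) by (auto simp: s_def)
  have "((\<lambda>s. X 0 s * y - Y 0 s * x) has_real_derivative X 1 s * y - Y 1 s * x) (at s)"
    using DERIV_diff[OF DERIV_cmult_right[OF X_derivative[OF s(2)]] DERIV_cmult_right[OF Y_derivative[OF s(2)]]]
    by simp
  then have "X 1 s * y - Y 1 s * x = 0"
    by (rule DERIV_locally_const_eq_0[OF open_greaterThanLessThan s(1), rotated]) (use assms(3) in auto)
  moreover have "x = X 1 s * (X 0 s * y - Y 0 s * x) - X 0 s * (X 1 s * y - Y 1 s * x)"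
    "y = Y 1 s * (X 0 s * y - Y 0 s * x) - Y 0 s * (X 1 s * y - Y 1 s * x)"
    using X_Y_unimodular[OF s(2)] by (simp_all add: algebra_simps flip: distrib_left)
  ultimately show ?thesis
    using assms(3) s(1) by simp
qed

lemma radial_projection_le:
  assumes "s \<in> I" "\<tau>\<^sup>2 = 1"
  shows "\<tau> * ((X 0 s * x + Y 0 s * y) / rad 0 s) \<le> sqrt (x\<^sup>2 + y\<^sup>2)"
proof -
  have "(X 0 s * x + Y 0 s * y)\<^sup>2 \<le> (rad 0 s * sqrt (x\<^sup>2 + y\<^sup>2))\<^sup>2"
    using lagrange_identity_rad[of s x y] zero_le_power2[of "X 0 s * y - Y 0 s * x"]
    unfolding power_mult_distrib real_sqrt_pow2[OF sum_power2_ge_zero] by linarith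
  then have "\<bar>X 0 s * x + Y 0 s * y\<bar> \<le> rad 0 s * sqrt (x\<^sup>2 + y\<^sup>2)"
    using rad_0_pos[OF assms(1)] by (simp add: abs_le_square_iff[symmetric])
  then have "\<bar>(X 0 s * x + Y 0 s * y) / rad 0 s\<bar> \<le> sqrt (x\<^sup>2 + y\<^sup>2)"
    using rad_0_pos[OF assms(1)] by (simp add: abs_divide divide_le_eq mult.commute)
  moreover have "\<bar>\<tau>\<bar> = 1" using assms(2) by (auto simp: power2_eq_1_iff)
  ultimately show ?thesis
    by (metis abs_ge_self abs_mult mult_1 order.trans)
qed

lemma radial_projection_eq:
  assumes "s \<in> I" "\<tau>\<^sup>2 = 1" "\<tau> * ((X 0 s * x + Y 0 s * y) / rad 0 s) = sqrt (x\<^sup>2 + y\<^sup>2)"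
  shows "X 0 s * y - Y 0 s * x = 0"
proof -
  have "\<tau> * (X 0 s * x + Y 0 s * y) = rad 0 s * sqrt (x\<^sup>2 + y\<^sup>2)"
    using assms(3) rad_0_pos[OF assms(1)] by (simp add: field_simps)
  then have "(\<tau> * (X 0 s * x + Y 0 s * y))\<^sup>2 = (rad 0 s * sqrt (x\<^sup>2 + y\<^sup>2))\<^sup>2"
    by simp
  then have "(X 0 s * x + Y 0 s * y)\<^sup>2 = (rad 0 s)\<^sup>2 * (x\<^sup>2 + y\<^sup>2)"
    using assms(2) by (simp add: power_mult_distrib)
  then show ?thesis
    using lagrange_identity_rad[of s x y] by simp
qed

lemma osc_value_strict_mono:
  assumes "t1 < t2" "{t1..t2} \<subseteq> I" "(x, y) \<noteq> (0, 0)" "\<tau>\<^sup>2 = 1"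
    and "\<forall>s\<in>{t1..t2}. 0 < \<sigma> * osc_c' s"
  shows "\<sigma> * \<tau> * osc_value \<tau> x y t1 < \<sigma> * \<tau> * osc_value \<tau> x y t2"
proof -
  define \<rho> where "\<rho> = sqrt (x\<^sup>2 + y\<^sup>2)"
  define c where "c s = (X 0 s * x + Y 0 s * y) / rad 0 s" for s
  show ?thesis
  proof (rule DERIV_nonneg_imp_strict_increasing[OF assms(1)])
    show "((\<lambda>s. \<sigma> * \<tau> * osc_value \<tau> x y s) has_real_derivative
      (\<sigma> * osc_c' s) * (\<rho> - \<tau> * c s)) (at s)" if "s \<in> {t1..t2}" for s
    proof -
      have "\<sigma> * \<tau> * (osc_c' s * (\<tau> * \<rho> - c s))
          = (\<sigma> * osc_c' s) * (\<rho> - \<tau> * c s) + \<sigma> * osc_c' s * \<rho> * (\<tau>\<^sup>2 - 1)"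
        by (simp add: power2_eq_square algebra_simps)
      then have e: "\<sigma> * \<tau> * (osc_c' s * (\<tau> * \<rho> - c s)) = (\<sigma> * osc_c' s) * (\<rho> - \<tau> * c s)"
        using assms(4) by simp
      have "s \<in> I" using assms(2) that by auto
      from DERIV_cmult[OF osc_value_derivative[OF this], of "\<sigma> * \<tau>" \<tau> x y] show ?thesis
        by (simp only: \<rho>_def c_def e[unfolded \<rho>_def c_def])
    qed
    show "0 \<le> (\<sigma> * osc_c' s) * (\<rho> - \<tau> * c s)" if "s \<in> {t1..t2}" for s
    proof -
      have "0 < \<sigma> * osc_c' s" using assms(5) that by blast
      moreover have "\<tau> * c s \<le> \<rho>"
        using radial_projection_le[OF _ assms(4)] assms(2) that unfolding \<rho>_def c_def by auto
      ultimately show ?thesis by simp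
    qed
    show "\<exists>s\<in>{t1<..<t2}. (\<sigma> * osc_c' s) * (\<rho> - \<tau> * c s) \<noteq> 0"
    proof (rule ccontr)
      assume none: "\<not> ?thesis"
      have "X 0 s * y - Y 0 s * x = 0" if "s \<in> {t1<..<t2}" for s
      proof -
        have "s \<in> I" "0 < \<sigma> * osc_c' s" using assms(2,5) that by auto
        moreover have "(\<sigma> * osc_c' s) * (\<rho> - \<tau> * c s) = 0" using none that by blast
        ultimately show ?thesis
          using radial_projection_eq[OF _ assms(4)] unfolding \<rho>_def c_def by auto
      qed
      then have "x = 0 \<and> y = 0"
        using assms(2) by (intro radial_eq_zero_on_interval[OF assms(1)]) auto
      with assms(3) show False by simp
    qed
  qed
qed

lemma osc_c_constant_sign:
  assumes "{t1..t2} \<subseteq> I" "\<forall>s\<in>{t1..t2}. p s \<noteq> 0"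
  obtains \<mu> :: real where "\<mu> = 1 \<or> \<mu> = -1" "\<forall>s\<in>{t1..t2}. 0 < \<mu> * osc_c s"
proof -
  have "continuous_on {t1..t2} osc_c"
    using assms(1) DERIV_isCont[OF osc_c_derivative] by (auto intro!: continuous_at_imp_continuous_on)
  moreover have "\<forall>s\<in>{t1..t2}. osc_c s \<noteq> 0"
    using osc_c_eq rad_0_pos assms by fastforce
  ultimately show ?thesis
    using connected_nonzero_sign[OF connected_Icc] that by metis
qed

lemma osc_c'_constant_sign:
  assumes "{t1..t2} \<subseteq> I" "\<forall>s\<in>{t1..t2}. osc_c' s \<noteq> 0"
  obtains \<sigma> :: real where "\<sigma> = 1 \<or> \<sigma> = -1" "\<forall>s\<in>{t1..t2}. 0 < \<sigma> * osc_c' s"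
proof -
  have "continuous_on {t1..t2} osc_c'"
    using assms(1) osc_c'_continuous by (auto intro!: continuous_at_imp_continuous_on)
  then show ?thesis
    using connected_nonzero_sign[OF connected_Icc _ assms(2)] that by metis
qed

lemma kepler_conics_osc_disjoint:
  assumes "t1 < t2" "{t1..t2} \<subseteq> I" "\<forall>s\<in>{t1..t2}. p s \<noteq> 0" "\<forall>s\<in>{t1..t2}. osc_c' s \<noteq> 0"
  shows "kepler_conic (osc_a t1, osc_b t1, osc_c t1) \<inter> kepler_conic (osc_a t2, osc_b t2, osc_c t2) = {}"
proof (rule ccontr)
  assume "kepler_conic (osc_a t1, osc_b t1, osc_c t1) \<inter> kepler_conic (osc_a t2, osc_b t2, osc_c t2) \<noteq> {}"
  then obtain x y where "(x, y) \<in> kepler_conic (osc_a t1, osc_b t1, osc_c t1)"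
    "(x, y) \<in> kepler_conic (osc_a t2, osc_b t2, osc_c t2)" by auto
  then have hit: "osc_value 1 x y t = 1 \<or> osc_value (-1) x y t = 1" if "t \<in> {t1, t2}" for t
    using that by (auto simp: kepler_conic_iff osc_value_def)
  have "(x, y) \<noteq> (0, 0)" using hit[of t1] by (auto simp: osc_value_def)
  then have \<rho>: "0 < sqrt (x\<^sup>2 + y\<^sup>2)" by (auto simp: sum_power2_gt_zero_iff)
  have ends: "t1 \<in> {t1..t2}" "t2 \<in> {t1..t2}" using assms(1) by auto
  obtain \<sigma> :: real where \<sigma>: "\<sigma> = 1 \<or> \<sigma> = -1" "\<forall>s\<in>{t1..t2}. 0 < \<sigma> * osc_c' s"
    using osc_c'_constant_sign[OF assms(2,4)] by blast
  obtain \<mu> :: real where \<mu>: "\<mu> = 1 \<or> \<mu> = -1" "\<forall>s\<in>{t1..t2}. 0 < \<mu> * osc_c s"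
    using osc_c_constant_sign[OF assms(2,3)] by blast
  have branch_gap: "0 < \<mu> * (osc_value 1 x y t - osc_value (-1) x y t)" if "t \<in> {t1..t2}" for t
  proof -
    have gap: "\<mu> * (osc_value 1 x y t - osc_value (-1) x y t) = 2 * (\<mu> * osc_c t) * sqrt (x\<^sup>2 + y\<^sup>2)"
      by (simp add: osc_value_def algebra_simps)
    have "0 < \<mu> * osc_c t" using \<mu>(2) that by blast
    then show ?thesis unfolding gap using \<rho> by simp
  qed
  note mono = osc_value_strict_mono[OF assms(1,2) \<open>(x, y) \<noteq> (0, 0)\<close> _ \<sigma>(2)]
  have "\<sigma> * 1 * osc_value 1 x y t1 < \<sigma> * 1 * osc_value 1 x y t2"
    by (rule mono) simp
  moreover have "\<sigma> * (-1) * osc_value (-1) x y t1 < \<sigma> * (-1) * osc_value (-1) x y t2"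
    by (rule mono) simp
  ultimately show False
    using hit[of t1] hit[of t2] \<sigma>(1) \<mu>(1) branch_gap[OF ends(1)] branch_gap[OF ends(2)] by auto
qed

end

theorem theorem3:
  fixes \<gamma> :: "real \<Rightarrow> real \<times> real" and p :: "real \<Rightarrow> real" and I :: "real set"
  assumes I_open: "open I" and I_interval: "is_interval I"
    and smooth: "smooth_curve_on I \<gamma>"
    and nonzero: "\<forall>t\<in>I. \<gamma> t \<noteq> 0"
    and centroaffine_param: "\<forall>t\<in>I. bracket (\<gamma> t) (vder 1 \<gamma> t) = 1"
    and curvature: "\<forall>t\<in>I. vder 2 \<gamma> t = - (p t) *\<^sub>R \<gamma> t"
    and curvature_nonzero: "\<forall>t\<in>I. p t \<noteq> 0"
    and no_hyperosc: "\<forall>t\<in>I. \<forall>v. \<not> hyperosculating_kepler v \<gamma> t"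
  shows "\<forall>t1\<in>I. \<forall>t2\<in>I. \<forall>v1 v2. t1 \<noteq> t2 \<and> osculating_kepler v1 \<gamma> t1 \<and> osculating_kepler v2 \<gamma> t2
           \<longrightarrow> kepler_conic v1 \<inter> kepler_conic v2 = {}"
proof -
  interpret centroaffine_curve \<gamma> p I
    using I_open smooth nonzero centroaffine_param curvature by unfold_locales
  have disjoint: "kepler_conic v1 \<inter> kepler_conic v2 = {}"
    if "t1 \<in> I" "t2 \<in> I" "t1 < t2" "osculating_kepler v1 \<gamma> t1" "osculating_kepler v2 \<gamma> t2"
    for t1 t2 v1 v2
  proof -
    have sub: "{t1..t2} \<subseteq> I"
      using mem_is_interval_1_I[OF I_interval that(1,2)] by auto
    then have "kepler_conic (osc_a t1, osc_b t1, osc_c t1) \<inter> kepler_conic (osc_a t2, osc_b t2, osc_c t2) = {}"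
      using curvature_nonzero osc_c'_nonzero no_hyperosc
      by (intro kepler_conics_osc_disjoint[OF that(3) sub]) auto
    then show ?thesis
      using osculating_kepler_conic[OF that(1,4)] osculating_kepler_conic[OF that(2,5)] by simp
  qed
  show ?thesis
  proof (intro ballI allI impI, elim conjE)
    fix t1 t2 v1 v2
    assume "t1 \<in> I" "t2 \<in> I" "t1 \<noteq> t2" "osculating_kepler v1 \<gamma> t1" "osculating_kepler v2 \<gamma> t2"
    then show "kepler_conic v1 \<inter> kepler_conic v2 = {}"
      using disjoint[of t1 t2 v1 v2] disjoint[of t2 t1 v2 v1] by (cases "t1 < t2") auto
  qed
qed

end
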